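(* Let $\lambda=(\lambda_1,\dots,\lambda_r)$ be a partition of $n$ with conjugate $\lambda'=(\lambda'_1,\dots,\lambda'_{r'})$, and let $i\ge 1$. Then $h_{2,1}(\lambda)\ge i$ and $h_{1,2}(\lambda)\ge i$ if and only if each of the two character polynomials $q_{[\lambda_2,\dots,\lambda_r]}$ and $q_{[\lambda'_2,\dots,\lambda'_{r'}]}$ contains, in some monomial with non-zero coefficient, a variable $x_j$ with $j\ge i$.
   Context: For a partition $\lambda$ and a cell $(x,y)$ of its Young (Ferrers) diagram (row $x$, column $y$, English convention), $h_{x,y}(\lambda)$ is the hook length at $(x,y)$, i.e. the number of cells to the right of $(x,y)$ in row $x$, plus the number of cells below it in column $y$, plus one; if $(x,y)$ is not a cell of $\lambda$ set $h_{x,y}(\lambda)=0$. For a partition $\mu$ of $m$ (possibly empty, $m=0$), its character polynomial is $q_\mu(x_1,\dots,x_m)=\downarrow\Big(\sum_{\alpha\vdash m}\frac{\chi_\mu(\alpha)}{z_\alpha}\prod_{k=1}^m (k x_k-1)^{a_k}\Big)$, where the sum is over partitions (cycle types) $\alpha=(1^{a_1},2^{a_2},\dots,m^{a_m})$ of $m$, $\chi_\mu(\alpha)$ is the irreducible character of $S_m$ indexed by $\mu$ evaluated at cycle type $\alpha$, $z_\alpha=\prod_k a_k!\,k^{a_k}$, and $\downarrow$ is the linear map sending each monomial $x_1^{c_1}\cdots x_m^{c_m}$ to the product of falling factorials $(x_1)_{c_1}\cdots(x_m)_{c_m}$. (For $\mu$ empty, $q_\mu=1$.) It satisfies $\chi_\lambda(\alpha)=q_{[\lambda_2,\dots,\lambda_r]}(a_1,\dots,a_{n-\lambda_1})$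 for every cycle type $\alpha=(1^{a_1},\dots,n^{a_n})$ of $S_n$. *)

theory Defs
  imports Complex_Main "HOL-Library.Poly_Mapping" "HOL-Combinatorics.Permutations"
begin

definition is_partition :: "nat \<Rightarrow> nat list \<Rightarrow> bool" where
  "is_partition n lam \<longleftrightarrow> sorted_wrt (\<ge>) lam \<and> (\<forall>p\<in>set lam. 0 < p) \<and> sum_list lam = n"

definition conj_part :: "nat list \<Rightarrow> nat list" where
  "conj_part lam = map (\<lambda>j. length (filter (\<lambda>p. j \<le> p) lam))
                      [1..<(if lam = [] then 0 else hd lam) + 1]"

definition part_nth :: "nat list \<Rightarrow> nat \<Rightarrow> nat" where
  "part_nth lam x = (if 1 \<le> x \<and> x \<le> length lam then lam ! (x - 1) else 0)"

(* hook length at cell (x,y) (row x, column y, 1-indexed); 0 if not a cell *)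
definition hook :: "nat \<Rightarrow> nat \<Rightarrow> nat list \<Rightarrow> nat" where
  "hook x y lam = (if 1 \<le> x \<and> 1 \<le> y \<and> y \<le> part_nth lam x
     then (part_nth lam x - y) + (part_nth (conj_part lam) y - x) + 1 else 0)"

(* Irreducible character chi_mu(alpha) of S_m (mu, alpha partitions of m),
   defined by the Frobenius formula: chi_mu(alpha) is the coefficient of
   x^(mu+delta) in a_delta * p_alpha, in l = length mu variables, with
   delta = (l-1,...,1,0), a_delta = sum_sigma sgn(sigma) prod_i x_i^(delta_(sigma i))
   and p_alpha = prod_k (x_0^(alpha_k) + ... + x_(l-1)^(alpha_k)), the latter
   expanded as a sum over maps f assigning to each part k a variable f k. *)
definition character :: "nat list \<Rightarrow> nat list \<Rightarrow> int" where
  "character mu alpha =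
     (let l = length mu; L = length alpha in
      \<Sum>\<sigma>\<in>{\<sigma>. \<sigma> permutes {0..<l}}. sign \<sigma> *
        int (card {f \<in> {0..<L} \<rightarrow>\<^sub>E {0..<l}.
           \<forall>i<l. mu ! i + (l - 1 - i) =
                  (l - 1 - \<sigma> i) + (\<Sum>k\<in>{k. k < L \<and> f k = i}. alpha ! k)}))"

(* multivariate polynomials over Q: monomials are finitely supported exponent maps
   (variable index k \<mapsto> exponent); variable x_k is index k *)
type_synonym mpoly = "(nat \<Rightarrow>\<^sub>0 nat) \<Rightarrow>\<^sub>0 rat"

definition Var :: "nat \<Rightarrow> mpoly" where
  "Var k = Poly_Mapping.single (Poly_Mapping.single k 1) 1"

definition Const :: "rat \<Rightarrow> mpoly" where
  "Const c = Poly_Mapping.single 0 c"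

definition ffact_var :: "nat \<Rightarrow> nat \<Rightarrow> mpoly" where
  "ffact_var k c = (\<Prod>t<c. Var k - Const (of_nat t))"

definition down :: "mpoly \<Rightarrow> mpoly" where
  "down P = (\<Sum>c\<in>Poly_Mapping.keys P.
               Const (Poly_Mapping.lookup P c) *
               (\<Prod>k\<in>Poly_Mapping.keys c. ffact_var k (Poly_Mapping.lookup c k)))"

definition zee :: "nat list \<Rightarrow> nat" where
  "zee alpha = (\<Prod>k\<in>set alpha. fact (count_list alpha k) * k ^ count_list alpha k)"

definition char_poly :: "nat list \<Rightarrow> mpoly" where
  "char_poly mu = (let m = sum_list mu in
     down (\<Sum>alpha\<in>{alpha. is_partition m alpha}.
        Const (of_int (character mu alpha) / of_nat (zee alpha)) *
        (\<Prod>k\<in>{1..m}. (Const (of_nat k) * Var k - 1) ^ count_list alpha k)))"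

definition has_var_ge :: "nat \<Rightarrow> mpoly \<Rightarrow> bool" where
  "has_var_ge i P \<longleftrightarrow> (\<exists>c. Poly_Mapping.lookup P c \<noteq> 0 \<and>
                          (\<exists>j\<ge>i. Poly_Mapping.lookup c j \<noteq> 0))"

end

theory Submission
  imports Defs "HOL-Library.Multiset"
begin

(* By Frobenius' formula, chi_mu(alpha) vanishes unless every part of alpha is at most the
   principal hook length h_{1,1}(mu) = mu_1 + l(mu) - 1; conversely, peeling off the principal
   hook repeatedly produces a cycle type alpha containing that part for which only one
   permutation contributes to the formula, so chi_mu(alpha) <> 0.
   In sum_alpha chi_mu(alpha)/z_alpha prod_k (k x_k - 1)^(a_k) the monomial prod_k x_k^(a_k) of
   each such alpha divides no other monomial, and the map "down" is unitriangular for
   divisibility, so the variables of q_mu are exactly the parts of the cycle types alpha with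
   chi_mu(alpha) <> 0. Thus q_mu contains a variable x_j with j >= i iff i <= h_{1,1}(mu), and
   the principal hooks of (lambda_2, ...) and (lambda'_2, ...) are h_{2,1}(lambda) and
   h_{1,2}(lambda). *)

section \<open>Variables and monomial bounds of polynomials\<close>

definition vars :: "mpoly \<Rightarrow> nat set" where
  "vars P = (\<Union>c\<in>Poly_Mapping.keys P. Poly_Mapping.keys c)"

lemma has_var_ge_iff_vars: "has_var_ge i P \<longleftrightarrow> (\<exists>j\<in>vars P. i \<le> j)"
  unfolding has_var_ge_def vars_def by (simp only: in_keys_iff UN_iff Bex_def) blast

lemma vars_diff: "vars (P - Q) \<subseteq> vars P \<union> vars Q"
  unfolding vars_def using keys_diff[of P Q] by blast

lemma vars_mult: "vars (P * Q) \<subseteq> vars P \<union> vars Q"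
proof
  fix x assume "x \<in> vars (P * Q)"
  then obtain c where c: "c \<in> Poly_Mapping.keys (P * Q)" "x \<in> Poly_Mapping.keys c"
    unfolding vars_def by blast
  then obtain a b where "c = a + b" "a \<in> Poly_Mapping.keys P" "b \<in> Poly_Mapping.keys Q"
    using keys_mult[of P Q] by blast
  then show "x \<in> vars P \<union> vars Q"
    using c keys_add[of a b] unfolding vars_def by blast
qed

lemma vars_Const: "vars (Const c) = {}"
  by (simp add: vars_def Const_def)

lemma vars_one: "vars 1 = {}"
  by (simp add: vars_def)

lemma vars_Var: "vars (Var k) \<subseteq> {k}"
  by (simp add: vars_def Var_def)

lemma vars_sum: "vars (sum f A) \<subseteq> (\<Union>a\<in>A. vars (f a))"
  unfolding vars_def using keys_sum[of f A] by blast

lemma vars_prod: "vars (prod f A) \<subseteq> (\<Union>a\<in>A. vars (f a))"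
proof (induction A rule: infinite_finite_induct)
  case (insert x F)
  then show ?case using vars_mult[of "f x" "prod f F"] by auto
qed (auto simp: vars_def)

lemma vars_power: "vars (P ^ n) \<subseteq> vars P"
  using vars_prod[of "\<lambda>_. P" "{..<n}"] by (cases "n = 0") (auto simp: lessThan_empty_iff)

text \<open>A monomial bound \<open>e\<close> of \<open>P\<close> plays the role of a leading monomial for the divisibility
  order, in which leading terms need not exist.\<close>

definition monoms_le :: "(nat \<Rightarrow>\<^sub>0 nat) \<Rightarrow> mpoly \<Rightarrow> bool" where
  "monoms_le e P \<longleftrightarrow> (\<forall>c\<in>Poly_Mapping.keys P. Poly_Mapping.lookup c \<le> Poly_Mapping.lookup e)"

lemma monoms_leD: "monoms_le e P \<Longrightarrow> Poly_Mapping.lookup P c \<noteq> 0 \<Longrightarrow> Poly_Mapping.lookup c \<le> Poly_Mapping.lookup e"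
  by (simp add: monoms_le_def in_keys_iff)

lemma monoms_le_diff: "monoms_le e P \<Longrightarrow> monoms_le e Q \<Longrightarrow> monoms_le e (P - Q)"
  unfolding monoms_le_def using keys_diff[of P Q] by blast

lemma monoms_le_mult:
  assumes "monoms_le e1 P" and "monoms_le e2 Q"
  shows "monoms_le (e1 + e2) (P * Q)"
  unfolding monoms_le_def
proof
  fix c assume "c \<in> Poly_Mapping.keys (P * Q)"
  then obtain a b where "c = a + b" "a \<in> Poly_Mapping.keys P" "b \<in> Poly_Mapping.keys Q"
    using keys_mult[of P Q] by blast
  with assms show "Poly_Mapping.lookup c \<le> Poly_Mapping.lookup (e1 + e2)"
    unfolding monoms_le_def by (auto simp: le_fun_def lookup_add intro: add_mono)
qed

lemma monoms_le_Const: "monoms_le e (Const r)"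
  by (simp add: monoms_le_def Const_def le_fun_def)

lemma monoms_le_one: "monoms_le e 1"
  by (simp add: monoms_le_def le_fun_def)

lemma monoms_le_Var: "monoms_le (Poly_Mapping.single k 1) (Var k)"
  by (simp add: monoms_le_def Var_def)

lemma monoms_le_prod:
  "(\<And>a. a \<in> A \<Longrightarrow> monoms_le (e a) (P a)) \<Longrightarrow> monoms_le (sum e A) (prod P A)"
proof (induction A rule: infinite_finite_induct)
  case (insert x F)
  then show ?case by (simp add: monoms_le_mult)
qed (simp_all add: monoms_le_one)

lemma pointwise_le_add_eq_imp_eq:
  fixes a b e1 e2 :: "nat \<Rightarrow>\<^sub>0 nat"
  assumes "Poly_Mapping.lookup a \<le> Poly_Mapping.lookup e1" "Poly_Mapping.lookup b \<le> Poly_Mapping.lookup e2"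
    and "a + b = e1 + e2"
  shows "a = e1"
proof (rule poly_mapping_eqI)
  fix k
  have "Poly_Mapping.lookup a k + Poly_Mapping.lookup b k = Poly_Mapping.lookup e1 k + Poly_Mapping.lookup e2 k"
    using assms(3) by (metis lookup_add)
  moreover have "Poly_Mapping.lookup a k \<le> Poly_Mapping.lookup e1 k" "Poly_Mapping.lookup b k \<le> Poly_Mapping.lookup e2 k"
    using assms(1,2) by (simp_all add: le_fun_def)
  ultimately show "Poly_Mapping.lookup a k = Poly_Mapping.lookup e1 k" by linarith
qed

lemma lookup_mult_top:
  assumes P: "monoms_le e1 P" and Q: "monoms_le e2 Q"
  shows "Poly_Mapping.lookup (P * Q) (e1 + e2) = Poly_Mapping.lookup P e1 * Poly_Mapping.lookup Q e2"
proof -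
  have each_term: "Poly_Mapping.lookup P l * Sum_any (\<lambda>q. Poly_Mapping.lookup Q q when e1 + e2 = l + q)
      = (Poly_Mapping.lookup P e1 * Poly_Mapping.lookup Q e2 when l = e1)" for l
  proof (cases "l \<noteq> e1 \<and> Poly_Mapping.lookup P l \<noteq> 0")
    case True
    have "(Poly_Mapping.lookup Q q when e1 + e2 = l + q) = 0" for q
      using pointwise_le_add_eq_imp_eq[OF monoms_leD[OF P] monoms_leD[OF Q], of l q] True
      by (cases "Poly_Mapping.lookup Q q = 0") (auto simp: when_def)
    with True show ?thesis by simp
  qed (auto simp: when_def)
  show ?thesis
    unfolding lookup_mult each_term by (rule Sum_any_when_equal)
qed

lemma lookup_prod_top:
  "(\<And>a. a \<in> A \<Longrightarrow> monoms_le (e a) (P a)) \<Longrightarrow>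
     Poly_Mapping.lookup (prod P A) (sum e A) = (\<Prod>a\<in>A. Poly_Mapping.lookup (P a) (e a))"
proof (induction A rule: infinite_finite_induct)
  case (insert x F)
  then show ?case by (simp add: lookup_mult_top monoms_le_prod)
qed simp_all

lemma sum_single_const: "(\<Sum>t<n. Poly_Mapping.single k (1::nat)) = Poly_Mapping.single k n"
  by (induction n) (simp_all add: single_add[symmetric])

lemma monoms_le_power:
  "monoms_le (Poly_Mapping.single k 1) P \<Longrightarrow> monoms_le (Poly_Mapping.single k n) (P ^ n)"
  using monoms_le_prod[of "{..<n}" "\<lambda>_. Poly_Mapping.single k 1" "\<lambda>_. P"]
  unfolding sum_single_const by simp

lemma lookup_power_top:
  "monoms_le (Poly_Mapping.single k 1) P \<Longrightarrow>
     Poly_Mapping.lookup (P ^ n) (Poly_Mapping.single k n) = Poly_Mapping.lookup P (Poly_Mapping.single k 1) ^ n"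
  using lookup_prod_top[of "{..<n}" "\<lambda>_. Poly_Mapping.single k 1" "\<lambda>_. P"]
  unfolding sum_single_const by simp

section \<open>Top monomials of the polynomials defining \<open>q\<^sub>\<mu>\<close>\<close>

definition cycle_poly :: "nat \<Rightarrow> nat list \<Rightarrow> mpoly" where
  "cycle_poly m \<alpha> = (\<Prod>k\<in>{1..m}. (Const (of_nat k) * Var k - 1) ^ count_list \<alpha> k)"

definition cycle_monom :: "nat \<Rightarrow> nat list \<Rightarrow> (nat \<Rightarrow>\<^sub>0 nat)" where
  "cycle_monom m \<alpha> = (\<Sum>k\<in>{1..m}. Poly_Mapping.single k (count_list \<alpha> k))"

definition ffact_monom :: "(nat \<Rightarrow>\<^sub>0 nat) \<Rightarrow> mpoly" where
  "ffact_monom c = (\<Prod>k\<in>Poly_Mapping.keys c. ffact_var k (Poly_Mapping.lookup c k))"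

lemma single_eq_0_iff [simp]: "Poly_Mapping.single k v = 0 \<longleftrightarrow> v = 0"
  by (metis lookup_single_eq lookup_zero single_zero)

lemma lookup_Const_mult: "Poly_Mapping.lookup (Const r * P) c = r * Poly_Mapping.lookup P c"
  unfolding Const_def by (simp flip: mult_map_scale_conv_mult add: map.rep_eq when_def)

lemma Const_mult_Var: "Const r * Var k = Poly_Mapping.single (Poly_Mapping.single k 1) r"
  unfolding Const_def Var_def by (simp add: mult_single)

lemma monoms_le_cycle_factor: "monoms_le (Poly_Mapping.single k 1) (Const (of_nat k) * Var k - 1)"
proof -
  have "monoms_le (0 + Poly_Mapping.single k 1) (Const (of_nat k) * Var k)"
    by (rule monoms_le_mult[OF monoms_le_Const monoms_le_Var])
  then show ?thesis by (intro monoms_le_diff monoms_le_one) simp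
qed

lemma lookup_cycle_factor_top:
  "Poly_Mapping.lookup (Const (of_nat k) * Var k - 1) (Poly_Mapping.single k 1) = of_nat k"
  by (simp add: Const_mult_Var lookup_minus lookup_one)

lemma monoms_le_cycle_poly: "monoms_le (cycle_monom m \<alpha>) (cycle_poly m \<alpha>)"
  unfolding cycle_monom_def cycle_poly_def
  using monoms_le_power[OF monoms_le_cycle_factor] by (rule monoms_le_prod)

lemma lookup_cycle_poly_top: "Poly_Mapping.lookup (cycle_poly m \<alpha>) (cycle_monom m \<alpha>) \<noteq> 0"
proof -
  have "Poly_Mapping.lookup ((Const (of_nat k) * Var k - 1) ^ n) (Poly_Mapping.single k n) = of_nat k ^ n"
    for k n
    unfolding lookup_power_top[OF monoms_le_cycle_factor] lookup_cycle_factor_top ..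
  then have "Poly_Mapping.lookup (cycle_poly m \<alpha>) (cycle_monom m \<alpha>) = (\<Prod>k\<in>{1..m}. of_nat k ^ count_list \<alpha> k)"
    unfolding cycle_monom_def cycle_poly_def
    using monoms_le_power[OF monoms_le_cycle_factor] by (simp add: lookup_prod_top)
  then show ?thesis by simp
qed

lemma vars_cycle_poly: "vars (cycle_poly m \<alpha>) \<subseteq> set \<alpha>"
proof -
  have "vars (Const (of_nat k) * Var k - 1) \<subseteq> {k}" for k
    using vars_diff[of "Const (of_nat k) * Var k" 1] vars_mult[of "Const (of_nat k)" "Var k"]
      vars_Const vars_Var vars_one by blast
  then have factor: "vars ((Const (of_nat k) * Var k - 1) ^ n) \<subseteq> {k}" for k n
    using vars_power by blast
  have "vars ((Const (of_nat k) * Var k - 1) ^ count_list \<alpha> k) \<subseteq> set \<alpha>" for k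
  proof (cases "k \<in> set \<alpha>")
    case False
    then have "count_list \<alpha> k = 0" by (simp add: count_list_0_iff)
    then show ?thesis by (simp add: vars_one)
  qed (use factor in blast)
  then show ?thesis
    unfolding cycle_poly_def using vars_prod by blast
qed

lemma lookup_cycle_monom:
  "Poly_Mapping.lookup (cycle_monom m \<alpha>) k = (if k \<in> {1..m} then count_list \<alpha> k else 0)"
  unfolding cycle_monom_def by (simp add: lookup_sum lookup_single when_def)

lemma down_eq_sum_ffact_monom:
  "down P = (\<Sum>c\<in>Poly_Mapping.keys P. Const (Poly_Mapping.lookup P c) * ffact_monom c)"
  unfolding down_def ffact_monom_def ..

lemma vars_ffact_monom: "vars (ffact_monom c) \<subseteq> Poly_Mapping.keys c"
proof -
  have "vars (ffact_var k n) \<subseteq> {k}" for k n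
    unfolding ffact_var_def
    using vars_prod[of "\<lambda>t. Var k - Const (of_nat t)" "{..<n}"] vars_diff vars_Var vars_Const by blast
  then show ?thesis
    unfolding ffact_monom_def
    using vars_prod[of "\<lambda>k. ffact_var k (Poly_Mapping.lookup c k)" "Poly_Mapping.keys c"] by blast
qed

lemma vars_down: "vars (down P) \<subseteq> vars P"
proof -
  have "vars (down P) \<subseteq> (\<Union>c\<in>Poly_Mapping.keys P. vars (Const (Poly_Mapping.lookup P c) * ffact_monom c))"
    unfolding down_eq_sum_ffact_monom by (rule vars_sum)
  also have "\<dots> \<subseteq> (\<Union>c\<in>Poly_Mapping.keys P. Poly_Mapping.keys c)"
    using vars_mult vars_Const vars_ffact_monom by (intro UN_mono) blast+
  finally show ?thesis by (simp add: vars_def)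
qed

lemma monoms_le_ffact_var: "monoms_le (Poly_Mapping.single k c) (ffact_var k c)"
proof -
  have "monoms_le (\<Sum>t<c. Poly_Mapping.single k 1) (\<Prod>t<c. Var k - Const (of_nat t))"
    by (intro monoms_le_prod monoms_le_diff monoms_le_Var monoms_le_Const)
  then show ?thesis by (simp only: ffact_var_def sum_single_const)
qed

lemma lookup_ffact_var_top: "Poly_Mapping.lookup (ffact_var k c) (Poly_Mapping.single k c) = 1"
proof -
  have "Poly_Mapping.lookup (\<Prod>t<c. Var k - Const (of_nat t)) (\<Sum>t<c. Poly_Mapping.single k 1)
      = (\<Prod>t<c. Poly_Mapping.lookup (Var k - Const (of_nat t)) (Poly_Mapping.single k 1))"
    by (intro lookup_prod_top monoms_le_diff monoms_le_Var monoms_le_Const)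
  also have "\<dots> = 1"
  proof -
    have "Poly_Mapping.lookup (Var k - Const r) (Poly_Mapping.single k 1) = 1" for r
      unfolding lookup_minus Var_def Const_def lookup_single by simp
    then show ?thesis by simp
  qed
  finally show ?thesis by (simp only: ffact_var_def sum_single_const)
qed

lemma sum_single_lookup_keys:
  "(\<Sum>k\<in>Poly_Mapping.keys c. Poly_Mapping.single k (Poly_Mapping.lookup c k)) = c"
  by (rule poly_mapping_eqI) (auto simp: lookup_sum lookup_single when_def in_keys_iff)

lemma monoms_le_ffact_monom: "monoms_le c (ffact_monom c)"
  using monoms_le_prod[of "Poly_Mapping.keys c" "\<lambda>k. Poly_Mapping.single k (Poly_Mapping.lookup c k)"]
  unfolding ffact_monom_def sum_single_lookup_keys by (simp add: monoms_le_ffact_var)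

lemma lookup_ffact_monom_top: "Poly_Mapping.lookup (ffact_monom c) c = 1"
  using lookup_prod_top[of "Poly_Mapping.keys c" "\<lambda>k. Poly_Mapping.single k (Poly_Mapping.lookup c k)"]
  unfolding ffact_monom_def sum_single_lookup_keys by (simp add: monoms_le_ffact_var lookup_ffact_var_top)

lemma lookup_down:
  "Poly_Mapping.lookup (down P) d =
     (\<Sum>c\<in>Poly_Mapping.keys P. Poly_Mapping.lookup P c * Poly_Mapping.lookup (ffact_monom c) d)"
  unfolding down_eq_sum_ffact_monom by (simp add: lookup_sum lookup_Const_mult)

text \<open>\<open>\<down>\<close> is unitriangular for divisibility: \<open>\<down>(x\<^sup>c) = x\<^sup>c + \<dots>\<close> with only divisors of \<open>x\<^sup>c\<close>
  in the dots.\<close>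

lemma lookup_down_maximal:
  assumes max: "\<forall>c\<in>Poly_Mapping.keys P. Poly_Mapping.lookup d \<le> Poly_Mapping.lookup c \<longrightarrow> c = d"
  shows "Poly_Mapping.lookup (down P) d = Poly_Mapping.lookup P d"
proof -
  have "Poly_Mapping.lookup P c * Poly_Mapping.lookup (ffact_monom c) d = (if c = d then Poly_Mapping.lookup P d else 0)"
    if "c \<in> Poly_Mapping.keys P" for c
  proof (cases "c = d")
    case False
    then have "Poly_Mapping.lookup (ffact_monom c) d = 0"
      using max that monoms_leD[OF monoms_le_ffact_monom, of c d] by blast
    with False show ?thesis by simp
  qed (simp add: lookup_ffact_monom_top)
  then have "Poly_Mapping.lookup (down P) d = (\<Sum>c\<in>Poly_Mapping.keys P. if c = d then Poly_Mapping.lookup P d else 0)"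
    unfolding lookup_down by (rule sum.cong[OF refl])
  then show ?thesis by (simp add: in_keys_iff)
qed

section \<open>The variables of a character polynomial\<close>

lemma partition_set: "is_partition m \<alpha> \<Longrightarrow> set \<alpha> \<subseteq> {1..m}"
  unfolding is_partition_def using member_le_sum_list[of _ \<alpha>] by fastforce

lemma partition_weighted_count: "is_partition m \<alpha> \<Longrightarrow> (\<Sum>k\<in>{1..m}. count_list \<alpha> k * k) = m"
  using sum_list_map_eq_sum_count2[OF partition_set, of m \<alpha> id]
  by (simp add: is_partition_def)

lemma finite_partitions: "finite {\<alpha>. is_partition m \<alpha>}"
proof (rule finite_subset[OF _ finite_lists_length_le[of "{1..m}" m]])
  have "length \<alpha> \<le> sum_list \<alpha>" if "\<forall>x\<in>set \<alpha>. 0 < x" for \<alpha> :: "nat list"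
    using that by (induction \<alpha>) auto
  then show "{\<alpha>. is_partition m \<alpha>} \<subseteq> {xs. set xs \<subseteq> {1..m} \<and> length xs \<le> m}"
    using partition_set unfolding is_partition_def by fastforce
qed simp

lemma sorted_desc_mset_eq:
  fixes xs ys :: "'a::linorder list"
  assumes "sorted_wrt (\<ge>) xs" and "sorted_wrt (\<ge>) ys" and "mset xs = mset ys"
  shows "xs = ys"
proof -
  have "sort (rev ys) = rev xs" "sort (rev ys) = rev ys"
    using assms by (auto intro!: properties_for_sort simp: sorted_wrt_rev)
  then show ?thesis by simp
qed

text \<open>Both monomials have weight \<open>\<Sum>\<^sub>k k a\<^sub>k = m\<close>.\<close>

lemma cycle_monom_le_imp_eq:
  assumes \<alpha>: "is_partition m \<alpha>" and \<beta>: "is_partition m \<beta>"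
    and le: "Poly_Mapping.lookup (cycle_monom m \<alpha>) \<le> Poly_Mapping.lookup (cycle_monom m \<beta>)"
  shows "\<alpha> = \<beta>"
proof -
  have weighted_le: "count_list \<alpha> k * k \<le> count_list \<beta> k * k" if "k \<in> {1..m}" for k
    using le_funD[OF le, of k] that by (simp add: lookup_cycle_monom)
  have "count_list \<alpha> k = count_list \<beta> k" for k
  proof (cases "k \<in> {1..m}")
    case True
    have "count_list \<alpha> k * k = count_list \<beta> k * k"
      using partition_weighted_count[OF \<alpha>] partition_weighted_count[OF \<beta>]
      by (intro sum_mono_inv[OF _ weighted_le True]) simp_all
    with True show ?thesis by simp
  next
    case False
    then have "k \<notin> set \<alpha>" "k \<notin> set \<beta>" using partition_set[OF \<alpha>] partition_set[OF \<beta>] by blast+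
    then show ?thesis by (simp add: count_list_0_iff)
  qed
  then have "mset \<alpha> = mset \<beta>" by (simp add: multiset_eq_iff flip: count_mset)
  with \<alpha> \<beta> show ?thesis unfolding is_partition_def by (blast intro: sorted_desc_mset_eq)
qed

lemma keys_cycle_sum:
  assumes "c \<in> Poly_Mapping.keys (\<Sum>\<alpha>\<in>A. Const (q \<alpha>) * cycle_poly m \<alpha>)"
  shows "\<exists>\<beta>\<in>A. Poly_Mapping.lookup c \<le> Poly_Mapping.lookup (cycle_monom m \<beta>)"
proof -
  obtain \<beta> where "\<beta> \<in> A" and c: "c \<in> Poly_Mapping.keys (Const (q \<beta>) * cycle_poly m \<beta>)"
    using assms keys_sum[of "\<lambda>\<alpha>. Const (q \<alpha>) * cycle_poly m \<alpha>" A] by blast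
  have "monoms_le (0 + cycle_monom m \<beta>) (Const (q \<beta>) * cycle_poly m \<beta>)"
    by (rule monoms_le_mult[OF monoms_le_Const monoms_le_cycle_poly])
  then have "Poly_Mapping.lookup c \<le> Poly_Mapping.lookup (cycle_monom m \<beta>)"
    using c unfolding monoms_le_def by simp
  with \<open>\<beta> \<in> A\<close> show ?thesis ..
qed

lemma vars_down_cycle_sum_subset:
  "vars (down (\<Sum>\<alpha>\<in>A. Const (q \<alpha>) * cycle_poly m \<alpha>)) \<subseteq> (\<Union>\<alpha>\<in>{\<alpha>\<in>A. q \<alpha> \<noteq> 0}. set \<alpha>)"
proof -
  have "vars (Const (q \<alpha>) * cycle_poly m \<alpha>) \<subseteq> (\<Union>\<alpha>\<in>{\<alpha>\<in>A. q \<alpha> \<noteq> 0}. set \<alpha>)" if "\<alpha> \<in> A" for \<alpha>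
  proof (cases "q \<alpha> = 0")
    case False
    have "vars (Const (q \<alpha>) * cycle_poly m \<alpha>) \<subseteq> set \<alpha>"
      using vars_mult[of "Const (q \<alpha>)" "cycle_poly m \<alpha>"] vars_Const vars_cycle_poly[of m \<alpha>] by blast
    with that False show ?thesis by blast
  qed (simp add: Const_def vars_def)
  then have "(\<Union>\<alpha>\<in>A. vars (Const (q \<alpha>) * cycle_poly m \<alpha>)) \<subseteq> (\<Union>\<alpha>\<in>{\<alpha>\<in>A. q \<alpha> \<noteq> 0}. set \<alpha>)"
    by (rule UN_least)
  with vars_down vars_sum show ?thesis by (rule order_trans[OF order_trans])
qed

lemma lookup_cycle_sum_cycle_monom:
  assumes "finite A" and part: "\<And>\<beta>. \<beta> \<in> A \<Longrightarrow> is_partition m \<beta>" and "\<alpha> \<in> A"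
  shows "Poly_Mapping.lookup (\<Sum>\<beta>\<in>A. Const (q \<beta>) * cycle_poly m \<beta>) (cycle_monom m \<alpha>)
    = q \<alpha> * Poly_Mapping.lookup (cycle_poly m \<alpha>) (cycle_monom m \<alpha>)"
proof -
  let ?d = "cycle_monom m \<alpha>"
  have "q \<beta> * Poly_Mapping.lookup (cycle_poly m \<beta>) ?d = (if \<beta> = \<alpha> then q \<alpha> * Poly_Mapping.lookup (cycle_poly m \<alpha>) ?d else 0)"
    if "\<beta> \<in> A" for \<beta>
  proof (cases "\<beta> = \<alpha>")
    case False
    then have "Poly_Mapping.lookup (cycle_poly m \<beta>) ?d = 0"
      using cycle_monom_le_imp_eq[OF part[OF \<open>\<alpha> \<in> A\<close>] part[OF that]] monoms_leD[OF monoms_le_cycle_poly]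
      by blast
    with False show ?thesis by simp
  qed simp
  then have "(\<Sum>\<beta>\<in>A. q \<beta> * Poly_Mapping.lookup (cycle_poly m \<beta>) ?d)
      = (\<Sum>\<beta>\<in>A. if \<beta> = \<alpha> then q \<alpha> * Poly_Mapping.lookup (cycle_poly m \<alpha>) ?d else 0)"
    by (rule sum.cong[OF refl])
  with assms(1,3) show ?thesis by (simp add: lookup_sum lookup_Const_mult)
qed

lemma cycle_monom_maximal:
  assumes part: "\<And>\<beta>. \<beta> \<in> A \<Longrightarrow> is_partition m \<beta>" and "\<alpha> \<in> A"
    and c: "c \<in> Poly_Mapping.keys (\<Sum>\<beta>\<in>A. Const (q \<beta>) * cycle_poly m \<beta>)"
    and le: "Poly_Mapping.lookup (cycle_monom m \<alpha>) \<le> Poly_Mapping.lookup c"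
  shows "c = cycle_monom m \<alpha>"
proof -
  obtain \<beta> where "\<beta> \<in> A" and c_le: "Poly_Mapping.lookup c \<le> Poly_Mapping.lookup (cycle_monom m \<beta>)"
    using keys_cycle_sum[OF c] by blast
  have "Poly_Mapping.lookup (cycle_monom m \<alpha>) \<le> Poly_Mapping.lookup (cycle_monom m \<beta>)"
    using le c_le by (rule order_trans)
  then have "\<alpha> = \<beta>" by (rule cycle_monom_le_imp_eq[OF part[OF \<open>\<alpha> \<in> A\<close>] part[OF \<open>\<beta> \<in> A\<close>]])
  with c_le le have "Poly_Mapping.lookup c = Poly_Mapping.lookup (cycle_monom m \<alpha>)" by simp
  then show ?thesis by (rule lookup_inject[THEN iffD1])
qed

lemma vars_down_cycle_sum:
  assumes fin: "finite A" and part: "\<And>\<alpha>. \<alpha> \<in> A \<Longrightarrow> is_partition m \<alpha>"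
  shows "vars (down (\<Sum>\<alpha>\<in>A. Const (q \<alpha>) * cycle_poly m \<alpha>)) = (\<Union>\<alpha>\<in>{\<alpha>\<in>A. q \<alpha> \<noteq> 0}. set \<alpha>)"
    (is "vars (down ?S) = _")
proof (intro equalityI vars_down_cycle_sum_subset subsetI)
  fix j assume "j \<in> (\<Union>\<alpha>\<in>{\<alpha>\<in>A. q \<alpha> \<noteq> 0}. set \<alpha>)"
  then obtain \<alpha> where \<alpha>: "\<alpha> \<in> A" "q \<alpha> \<noteq> 0" and j: "j \<in> set \<alpha>" by blast
  have "Poly_Mapping.lookup (down ?S) (cycle_monom m \<alpha>) = Poly_Mapping.lookup ?S (cycle_monom m \<alpha>)"
    using cycle_monom_maximal[OF part \<alpha>(1)] by (intro lookup_down_maximal) blast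
  also have "\<dots> = q \<alpha> * Poly_Mapping.lookup (cycle_poly m \<alpha>) (cycle_monom m \<alpha>)"
    by (rule lookup_cycle_sum_cycle_monom[OF fin part \<alpha>(1)])
  finally have "cycle_monom m \<alpha> \<in> Poly_Mapping.keys (down ?S)"
    using \<alpha>(2) lookup_cycle_poly_top by (simp add: in_keys_iff)
  moreover have "j \<in> Poly_Mapping.keys (cycle_monom m \<alpha>)"
  proof -
    have "count_list \<alpha> j \<noteq> 0" using j by (simp add: count_list_0_iff)
    then show ?thesis
      using j partition_set[OF part[OF \<alpha>(1)]] unfolding in_keys_iff lookup_cycle_monom by auto
  qed
  ultimately show "j \<in> vars (down ?S)"
    unfolding vars_def by blast
qed

lemma vars_char_poly:
  "vars (char_poly \<mu>) = (\<Union>\<alpha>\<in>{\<alpha>. is_partition (sum_list \<mu>) \<alpha> \<and> character \<mu> \<alpha> \<noteq> 0}. set \<alpha>)"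
proof -
  have "of_int (character \<mu> \<alpha>) / of_nat (zee \<alpha>) \<noteq> (0::rat) \<longleftrightarrow> character \<mu> \<alpha> \<noteq> 0"
    if "is_partition m \<alpha>" for m \<alpha>
    using that unfolding zee_def is_partition_def by auto
  then show ?thesis
    unfolding char_poly_def Let_def cycle_poly_def[symmetric]
    by (subst vars_down_cycle_sum) (auto simp: finite_partitions)
qed

section \<open>Frobenius' formula and the largest part of a cycle type\<close>

definition fiber_sum :: "nat list \<Rightarrow> (nat \<Rightarrow> nat) \<Rightarrow> nat \<Rightarrow> nat" where
  "fiber_sum \<alpha> f i = (\<Sum>k\<in>{k. k < length \<alpha> \<and> f k = i}. \<alpha> ! k)"

text \<open>In \<^const>\<open>character\<close>, a map \<open>f\<close> distributes the parts of \<open>\<alpha>\<close> over the rows so that row \<open>i\<close>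
  receives \<open>\<mu>\<^sub>i + \<delta>\<^sub>i - \<delta>\<^sub>\<sigma>\<^sub>(\<^sub>i\<^sub>)\<close>; then \<open>\<chi>\<^sub>\<mu>(\<alpha>) = \<Sum>\<^sub>\<sigma> sgn \<sigma> \<cdot> #(frobenius_maps \<mu> \<alpha> \<sigma>)\<close>.\<close>

definition frobenius_maps :: "nat list \<Rightarrow> nat list \<Rightarrow> (nat \<Rightarrow> nat) \<Rightarrow> (nat \<Rightarrow> nat) set" where
  "frobenius_maps \<mu> \<alpha> \<sigma> = {f \<in> {0..<length \<alpha>} \<rightarrow>\<^sub>E {0..<length \<mu>}.
     \<forall>i<length \<mu>. \<mu> ! i + (length \<mu> - 1 - i) = (length \<mu> - 1 - \<sigma> i) + fiber_sum \<alpha> f i}"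

definition frobenius_pairs :: "nat list \<Rightarrow> nat list \<Rightarrow> ((nat \<Rightarrow> nat) \<times> (nat \<Rightarrow> nat)) set" where
  "frobenius_pairs \<mu> \<alpha> = {(\<sigma>, f). \<sigma> permutes {0..<length \<mu>} \<and> f \<in> frobenius_maps \<mu> \<alpha> \<sigma>}"

lemma character_eq_sum_frobenius_maps:
  "character \<mu> \<alpha> = (\<Sum>\<sigma>\<in>{\<sigma>. \<sigma> permutes {0..<length \<mu>}}. sign \<sigma> * int (card (frobenius_maps \<mu> \<alpha> \<sigma>)))"
  unfolding character_def frobenius_maps_def fiber_sum_def Let_def by simp

lemma frobenius_maps_PiE: "f \<in> frobenius_maps \<mu> \<alpha> \<sigma> \<Longrightarrow> f \<in> {0..<length \<alpha>} \<rightarrow>\<^sub>E {0..<length \<mu>}"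
  unfolding frobenius_maps_def by blast

lemma finite_frobenius_maps: "finite (frobenius_maps \<mu> \<alpha> \<sigma>)"
  unfolding frobenius_maps_def
  by (rule finite_subset[OF _ finite_PiE[of "{0..<length \<alpha>}" "\<lambda>_. {0..<length \<mu>}"]]) auto

lemma character_ne_zero_if_unique_perm:
  assumes unique: "fst ` frobenius_pairs \<mu> \<alpha> = {\<sigma>}"
  shows "character \<mu> \<alpha> \<noteq> 0"
proof -
  have "\<sigma> \<in> fst ` frobenius_pairs \<mu> \<alpha>" using unique by simp
  then obtain f where "(\<sigma>, f) \<in> frobenius_pairs \<mu> \<alpha>" by force
  then have \<sigma>: "\<sigma> permutes {0..<length \<mu>}" "frobenius_maps \<mu> \<alpha> \<sigma> \<noteq> {}"
    unfolding frobenius_pairs_def by auto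
  have "frobenius_maps \<mu> \<alpha> \<tau> = {}" if "\<tau> permutes {0..<length \<mu>}" "\<tau> \<noteq> \<sigma>" for \<tau>
    using unique that unfolding frobenius_pairs_def by (auto simp: image_iff)
  then have "character \<mu> \<alpha> = (\<Sum>\<tau>\<in>{\<tau>. \<tau> permutes {0..<length \<mu>}}.
      if \<tau> = \<sigma> then sign \<sigma> * int (card (frobenius_maps \<mu> \<alpha> \<sigma>)) else 0)"
    unfolding character_eq_sum_frobenius_maps by (intro sum.cong) auto
  also have "\<dots> = sign \<sigma> * int (card (frobenius_maps \<mu> \<alpha> \<sigma>))"
    using \<sigma>(1) by (simp add: finite_permutations)
  finally show ?thesis
    using \<sigma>(2) finite_frobenius_maps by (simp add: sign_def)
qed

lemma fiber_sum_ge: "k < length \<alpha> \<Longrightarrow> f k = i \<Longrightarrow> \<alpha> ! k \<le> fiber_sum \<alpha> f i"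
  unfolding fiber_sum_def by (rule member_le_sum) auto

lemma fiber_sum_gt:
  assumes "k < length \<alpha>" "k' < length \<alpha>" "k \<noteq> k'" "f k = i" "f k' = i" "0 < \<alpha> ! k'"
  shows "\<alpha> ! k < fiber_sum \<alpha> f i"
proof -
  have "\<alpha> ! k + \<alpha> ! k' = (\<Sum>k\<in>{k, k'}. \<alpha> ! k)" using assms(3) by simp
  also have "\<dots> \<le> fiber_sum \<alpha> f i"
    unfolding fiber_sum_def using assms(1-5) by (intro sum_mono2) auto
  finally show ?thesis using assms(6) by linarith
qed

definition principal_hook :: "nat list \<Rightarrow> nat" where
  "principal_hook \<mu> = (if \<mu> = [] then 0 else hd \<mu> + length \<mu> - 1)"

lemma part_le_principal_hook:
  assumes sorted: "sorted_wrt (\<ge>) \<mu>" and x: "x \<in> set \<alpha>" and char: "character \<mu> \<alpha> \<noteq> 0"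
  shows "x \<le> principal_hook \<mu>"
proof -
  obtain \<sigma> where "\<sigma> permutes {0..<length \<mu>}" "sign \<sigma> * int (card (frobenius_maps \<mu> \<alpha> \<sigma>)) \<noteq> 0"
    using char unfolding character_eq_sum_frobenius_maps by (auto elim: sum.not_neutral_contains_not_neutral)
  then obtain f where \<sigma>: "\<sigma> permutes {0..<length \<mu>}" and f: "f \<in> frobenius_maps \<mu> \<alpha> \<sigma>"
    by fastforce
  obtain k where k: "k < length \<alpha>" "\<alpha> ! k = x" using x by (meson in_set_conv_nth)
  define i where "i = f k"
  have i: "i < length \<mu>" using frobenius_maps_PiE[OF f] k(1) unfolding i_def by (auto simp: PiE_iff)
  have "\<mu> ! i + (length \<mu> - 1 - i) = (length \<mu> - 1 - \<sigma> i) + fiber_sum \<alpha> f i"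
    using f i unfolding frobenius_maps_def by blast
  moreover have "x \<le> fiber_sum \<alpha> f i" using fiber_sum_ge k unfolding i_def by blast
  moreover have "\<mu> ! i \<le> hd \<mu>"
  proof -
    have "hd \<mu> = \<mu> ! 0" using i by (cases \<mu>) auto
    then show ?thesis using sorted_wrt_nth_less[OF sorted, of 0 i] i by (cases "i = 0") auto
  qed
  ultimately show ?thesis using i unfolding principal_hook_def by auto
qed

lemma frobenius_maps_append_zero:
  assumes pos: "\<forall>x\<in>set \<alpha>. 0 < x" and \<sigma>: "\<sigma> permutes {0..<length \<mu>}"
  shows "frobenius_maps (\<mu> @ [0]) \<alpha> \<sigma> = frobenius_maps \<mu> \<alpha> \<sigma>"
proof -
  let ?l = "length \<mu>"
  define row where "row \<nu> f i \<longleftrightarrow> \<nu> ! i + (length \<nu> - 1 - i) = (length \<nu> - 1 - \<sigma> i) + fiber_sum \<alpha> f i"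
    for \<nu> :: "nat list" and f i
  have maps_eq: "frobenius_maps \<nu> \<alpha> \<sigma> = {f \<in> {0..<length \<alpha>} \<rightarrow>\<^sub>E {0..<length \<nu>}. \<forall>i<length \<nu>. row \<nu> f i}" for \<nu>
    unfolding frobenius_maps_def row_def ..
  have rows: "row (\<mu> @ [0]) f i \<longleftrightarrow> row \<mu> f i" if "i < ?l" for f i
    using permutes_nat_less[OF \<sigma> that] that unfolding row_def by (simp add: nth_append) arith
  have last_row: "row (\<mu> @ [0]) f ?l \<longleftrightarrow> (\<forall>k<length \<alpha>. f k \<noteq> ?l)" for f
    using permutes_not_in[OF \<sigma>, of ?l] fiber_sum_ge[of _ \<alpha> f ?l] pos nth_mem
    unfolding row_def by (fastforce simp: fiber_sum_def)
  have range: "f \<in> {0..<length \<alpha>} \<rightarrow>\<^sub>E {0..<Suc ?l} \<and> (\<forall>k<length \<alpha>. f k \<noteq> ?l)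
      \<longleftrightarrow> f \<in> {0..<length \<alpha>} \<rightarrow>\<^sub>E {0..<?l}" for f
    by (auto simp: PiE_iff less_Suc_eq) (metis atLeastLessThan_iff le0 less_irrefl)
  show ?thesis
  proof (rule set_eqI)
    fix f
    have "f \<in> frobenius_maps (\<mu> @ [0]) \<alpha> \<sigma> \<longleftrightarrow>
        (f \<in> {0..<length \<alpha>} \<rightarrow>\<^sub>E {0..<Suc ?l} \<and> (\<forall>k<length \<alpha>. f k \<noteq> ?l)) \<and> (\<forall>i<?l. row \<mu> f i)"
      unfolding maps_eq length_append_singleton All_less_Suc using rows last_row by auto
    then show "f \<in> frobenius_maps (\<mu> @ [0]) \<alpha> \<sigma> \<longleftrightarrow> f \<in> frobenius_maps \<mu> \<alpha> \<sigma>"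
      unfolding range maps_eq by simp
  qed
qed

lemma frobenius_perm_fixes_zero_row:
  assumes \<sigma>: "\<sigma> permutes {0..<Suc (length \<mu>)}" and f: "f \<in> frobenius_maps (\<mu> @ [0]) \<alpha> \<sigma>"
  shows "\<sigma> permutes {0..<length \<mu>}"
proof -
  have "(\<mu> @ [0]) ! length \<mu> + 0 = (length \<mu> - \<sigma> (length \<mu>)) + fiber_sum \<alpha> f (length \<mu>)"
    using f unfolding frobenius_maps_def by auto
  moreover have "\<sigma> (length \<mu>) < Suc (length \<mu>)" using permutes_nat_less[OF \<sigma>] by simp
  ultimately have "\<sigma> (length \<mu>) = length \<mu>" by simp
  then show ?thesis by (intro permutes_superset[OF \<sigma>]) (auto simp: less_Suc_eq)
qed

lemma frobenius_pairs_append_zero: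
  assumes "\<forall>x\<in>set \<alpha>. 0 < x"
  shows "frobenius_pairs (\<mu> @ [0]) \<alpha> = frobenius_pairs \<mu> \<alpha>"
  unfolding frobenius_pairs_def
  using frobenius_perm_fixes_zero_row frobenius_maps_append_zero[OF assms]
  by (fastforce intro: permutes_subset)

lemma frobenius_pairs_append_zeros:
  "\<forall>x\<in>set \<alpha>. 0 < x \<Longrightarrow> frobenius_pairs (\<mu> @ replicate z 0) \<alpha> = frobenius_pairs \<mu> \<alpha>"
  by (induction z) (simp_all add: frobenius_pairs_append_zero replicate_append_same[symmetric]
      flip: append_assoc)

definition cons_perm :: "nat \<Rightarrow> (nat \<Rightarrow> nat) \<Rightarrow> nat \<Rightarrow> nat" where
  "cons_perm l \<tau> i = (if i = 0 then l else if i \<le> l then \<tau> (i - 1) else i)"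

definition cons_map :: "nat \<Rightarrow> (nat \<Rightarrow> nat) \<Rightarrow> nat \<Rightarrow> nat" where
  "cons_map L g k = (if k = 0 then 0 else if k \<le> L then Suc (g (k - 1)) else undefined)"

lemma cons_perm_permutes:
  assumes \<tau>: "\<tau> permutes {0..<l}"
  shows "cons_perm l \<tau> permutes {0..<Suc l}"
proof (rule inj_imp_permutes)
  have lt: "\<tau> j < l" if "j < l" for j using permutes_nat_less[OF \<tau> that] .
  have rest: "cons_perm l \<tau> i < l" if "0 < i" "i < Suc l" for i
  proof -
    have "\<tau> (i - 1) < l" using that lt by simp
    with that show ?thesis by (simp add: cons_perm_def)
  qed
  then have first: "cons_perm l \<tau> i = l \<longleftrightarrow> i = 0" if "i < Suc l" for i
    using that by (cases "i = 0") (auto simp: cons_perm_def)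
  show "inj_on (cons_perm l \<tau>) {0..<Suc l}"
  proof (rule inj_onI)
    fix i j assume i: "i \<in> {0..<Suc l}" and j: "j \<in> {0..<Suc l}"
      and eq: "cons_perm l \<tau> i = cons_perm l \<tau> j"
    show "i = j"
    proof (cases "i = 0 \<or> j = 0")
      case True
      then show ?thesis using eq first[of i] first[of j] i j by (auto simp: cons_perm_def)
    next
      case False
      then have "\<tau> (i - 1) = \<tau> (j - 1)" using eq i j by (simp add: cons_perm_def)
      then have "i - 1 = j - 1" using permutes_inj[OF \<tau>] by (simp add: inj_eq)
      with False show ?thesis by linarith
    qed
  qed
  show "cons_perm l \<tau> i \<in> {0..<Suc l}" if "i \<in> {0..<Suc l}" for i
    using that rest[of i] by (cases "i = 0") (auto simp: cons_perm_def)
qed (simp_all add: cons_perm_def)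

lemma permutes_eq_cons_perm:
  assumes \<sigma>: "\<sigma> permutes {0..<Suc l}" and \<sigma>0: "\<sigma> 0 = l"
  obtains \<tau> where "\<tau> permutes {0..<l}" "\<sigma> = cons_perm l \<tau>"
proof
  define \<tau> where "\<tau> j = (if j < l then \<sigma> (Suc j) else j)" for j
  have lt: "\<tau> j < l" if "j < l" for j
  proof -
    have "\<sigma> (Suc j) \<noteq> \<sigma> 0" using permutes_inj[OF \<sigma>] by (simp add: inj_eq)
    moreover have "\<sigma> (Suc j) < Suc l" using permutes_nat_less[OF \<sigma>, of "Suc j"] that by simp
    ultimately show ?thesis using \<sigma>0 that unfolding \<tau>_def by simp
  qed
  show "\<tau> permutes {0..<l}"
  proof (rule inj_imp_permutes)
    show "inj_on \<tau> {0..<l}"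
      using permutes_inj[OF \<sigma>] unfolding \<tau>_def by (auto intro!: inj_onI simp: inj_eq)
  qed (use lt in \<open>auto simp: \<tau>_def\<close>)
  show "\<sigma> = cons_perm l \<tau>"
  proof
    fix i
    show "\<sigma> i = cons_perm l \<tau> i"
      using \<sigma>0 permutes_not_in[OF \<sigma>, of i] by (cases i) (auto simp: cons_perm_def \<tau>_def)
  qed
qed

lemma cons_map_PiE:
  "g \<in> {0..<L} \<rightarrow>\<^sub>E {0..<l} \<Longrightarrow> cons_map L g \<in> {0..<Suc L} \<rightarrow>\<^sub>E {0..<Suc l}"
  by (auto simp: PiE_iff cons_map_def extensional_def)

lemma PiE_eq_cons_map:
  assumes f: "f \<in> {0..<Suc L} \<rightarrow>\<^sub>E {0..<Suc l}" and f0: "f 0 = 0"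
    and f_pos: "\<And>k. 0 < k \<Longrightarrow> k \<le> L \<Longrightarrow> f k \<noteq> 0"
  obtains g where "g \<in> {0..<L} \<rightarrow>\<^sub>E {0..<l}" and "f = cons_map L g"
proof
  define g where "g k = (if k < L then f (Suc k) - 1 else undefined)" for k
  have "g k < l" if "k < L" for k
  proof -
    have "f (Suc k) < Suc l" using f that by (auto simp: PiE_iff)
    moreover have "f (Suc k) \<noteq> 0" using f_pos that by simp
    ultimately show ?thesis using that by (simp add: g_def)
  qed
  then show "g \<in> {0..<L} \<rightarrow>\<^sub>E {0..<l}"
    by (auto simp: PiE_iff extensional_def g_def)
  show "f = cons_map L g"
  proof
    fix k
    show "f k = cons_map L g k"
    proof (cases "k = 0 \<or> L < k")
      case True
      then show ?thesis using f0 PiE_arb[OF f, of k] by (auto simp: cons_map_def)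
    next
      case False
      then have "f k \<noteq> 0" and "k - 1 < L" using f_pos by auto
      with False show ?thesis by (simp add: cons_map_def g_def)
    qed
  qed
qed

lemma fiber_sum_cons_map_0: "fiber_sum (h # \<alpha>) (cons_map (length \<alpha>) g) 0 = h"
proof -
  have "{k. k < length (h # \<alpha>) \<and> cons_map (length \<alpha>) g k = 0} = {0}"
    by (auto simp: cons_map_def)
  then show ?thesis by (simp add: fiber_sum_def)
qed

lemma fiber_sum_cons_map_Suc:
  "fiber_sum (h # \<alpha>) (cons_map (length \<alpha>) g) (Suc i) = fiber_sum \<alpha> g i"
proof -
  have "{k. k < length (h # \<alpha>) \<and> cons_map (length \<alpha>) g k = Suc i} = Suc ` {k. k < length \<alpha> \<and> g k = i}"
  proof (intro set_eqI iffI)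
    fix k assume k: "k \<in> {k. k < length (h # \<alpha>) \<and> cons_map (length \<alpha>) g k = Suc i}"
    then obtain k' where "k = Suc k'" by (cases k) (auto simp: cons_map_def)
    with k show "k \<in> Suc ` {k. k < length \<alpha> \<and> g k = i}" by (auto simp: cons_map_def)
  qed (auto simp: cons_map_def)
  then show ?thesis unfolding fiber_sum_def by (simp add: sum.reindex)
qed

text \<open>Removing the first column of \<open>\<mu>\<close> and the part \<open>\<mu>\<^sub>1 + \<ell>(\<mu>) - 1\<close> of \<open>\<alpha>\<close> (placed in row 0)
  shifts every remaining row equation by one on both sides.\<close>

lemma frobenius_rows_cons_hook:
  assumes ge1: "\<forall>x\<in>set \<mu>. 1 \<le> x" and \<tau>: "\<tau> permutes {0..<length \<mu>}"
  shows "(\<forall>i<length (a # \<mu>). (a # \<mu>) ! i + (length (a # \<mu>) - 1 - i)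
            = (length (a # \<mu>) - 1 - cons_perm (length \<mu>) \<tau> i)
              + fiber_sum ((a + length \<mu>) # \<alpha>) (cons_map (length \<alpha>) g) i)
    \<longleftrightarrow> (\<forall>j<length (map (\<lambda>x. x - 1) \<mu>). map (\<lambda>x. x - 1) \<mu> ! j + (length (map (\<lambda>x. x - 1) \<mu>) - 1 - j)
            = (length (map (\<lambda>x. x - 1) \<mu>) - 1 - \<tau> j) + fiber_sum \<alpha> g j)"
proof -
  have "\<mu> ! j + (length \<mu> - Suc j) = (length \<mu> - \<tau> j) + s
      \<longleftrightarrow> (\<mu> ! j - 1) + (length \<mu> - 1 - j) = (length \<mu> - 1 - \<tau> j) + s" if "j < length \<mu>" for j s
  proof -
    have "1 \<le> \<mu> ! j" using ge1 nth_mem[OF that] by blast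
    with permutes_nat_less[OF \<tau> that] that show ?thesis by arith
  qed
  then show ?thesis
    unfolding All_less_Suc2 length_Cons
    by (simp add: cons_perm_def fiber_sum_cons_map_0 fiber_sum_cons_map_Suc)
qed

lemma cons_map_in_frobenius_maps_iff:
  assumes ge1: "\<forall>x\<in>set \<mu>. 1 \<le> x" and \<tau>: "\<tau> permutes {0..<length \<mu>}"
    and g: "g \<in> {0..<length \<alpha>} \<rightarrow>\<^sub>E {0..<length \<mu>}"
  shows "cons_map (length \<alpha>) g \<in> frobenius_maps (a # \<mu>) ((a + length \<mu>) # \<alpha>) (cons_perm (length \<mu>) \<tau>)
    \<longleftrightarrow> g \<in> frobenius_maps (map (\<lambda>x. x - 1) \<mu>) \<alpha> \<tau>"
  using cons_map_PiE[OF g] g frobenius_rows_cons_hook[OF ge1 \<tau>, of a \<alpha> g]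
  unfolding frobenius_maps_def mem_Collect_eq length_Cons length_map by blast

text \<open>The part \<open>\<mu>\<^sub>1 + \<ell>(\<mu>) - 1\<close> is more than any row but row 0 can take, and it fills row 0
  exactly when \<open>\<sigma> 0 = \<ell>(\<mu>) - 1\<close>: so it lies alone in row 0 and fixes \<open>\<sigma> 0\<close>.\<close>

lemma frobenius_hook_part_in_row_0:
  assumes \<mu>: "\<forall>x\<in>set \<mu>. x \<le> a" and pos: "\<forall>x\<in>set \<alpha>. 0 < x"
    and \<sigma>: "\<sigma> permutes {0..<Suc (length \<mu>)}"
    and f: "f \<in> frobenius_maps (a # \<mu>) ((a + length \<mu>) # \<alpha>) \<sigma>"
  shows "\<sigma> 0 = length \<mu>" and "f 0 = 0" and "\<And>k. 0 < k \<Longrightarrow> k \<le> length \<alpha> \<Longrightarrow> f k \<noteq> 0"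
proof -
  let ?l = "length \<mu>" and ?\<alpha> = "(a + length \<mu>) # \<alpha>"
  define i where "i = f 0"
  have i: "i < Suc ?l" using frobenius_maps_PiE[OF f] unfolding i_def by (auto simp: PiE_iff)
  have row: "(a # \<mu>) ! i + (?l - i) = (?l - \<sigma> i) + fiber_sum ?\<alpha> f i"
    using f i unfolding frobenius_maps_def by auto
  have "(a # \<mu>) ! i \<le> a" using \<mu> i by (cases i) auto
  moreover have "a + ?l \<le> fiber_sum ?\<alpha> f i" using fiber_sum_ge[of 0 ?\<alpha> f i] unfolding i_def by simp
  moreover have "\<sigma> i < Suc ?l" using permutes_nat_less[OF \<sigma> i] .
  ultimately have "i = 0 \<and> \<sigma> i = ?l \<and> fiber_sum ?\<alpha> f i = a + ?l"
    using row i by arith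
  then have i0: "i = 0" and \<sigma>0: "\<sigma> i = ?l" and fills: "fiber_sum ?\<alpha> f 0 = a + ?l"
    by auto
  show "\<sigma> 0 = ?l" "f 0 = 0" using i0 \<sigma>0 unfolding i_def by simp_all
  show "f k \<noteq> 0" if "0 < k" "k \<le> length \<alpha>" for k
  proof
    assume "f k = 0"
    with that pos have "?\<alpha> ! 0 < fiber_sum ?\<alpha> f 0"
      using i0 unfolding i_def by (intro fiber_sum_gt[of 0 _ k]) (auto simp: nth_Cons')
    with fills show False by simp
  qed
qed

lemma frobenius_pairs_cons_hook:
  assumes \<mu>: "\<forall>x\<in>set \<mu>. 1 \<le> x \<and> x \<le> a" and pos: "\<forall>x\<in>set \<alpha>. 0 < x"
  shows "frobenius_pairs (a # \<mu>) ((a + length \<mu>) # \<alpha>) =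
    (\<lambda>(\<tau>, g). (cons_perm (length \<mu>) \<tau>, cons_map (length \<alpha>) g)) ` frobenius_pairs (map (\<lambda>x. x - 1) \<mu>) \<alpha>"
    (is "?P = ?F ` ?Q")
proof (intro equalityI subsetI)
  let ?l = "length \<mu>" and ?L = "length \<alpha>"
  have ge1: "\<forall>x\<in>set \<mu>. 1 \<le> x" using \<mu> by blast
  fix p
  assume "p \<in> ?P"
  then obtain \<sigma> f where p: "p = (\<sigma>, f)" and \<sigma>: "\<sigma> permutes {0..<Suc ?l}"
    and f: "f \<in> frobenius_maps (a # \<mu>) ((a + ?l) # \<alpha>) \<sigma>"
    unfolding frobenius_pairs_def by auto
  have "\<forall>x\<in>set \<mu>. x \<le> a" using \<mu> by blast
  note hook = frobenius_hook_part_in_row_0[OF this pos \<sigma> f]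
  obtain \<tau> where \<tau>: "\<tau> permutes {0..<?l}" and \<sigma>_eq: "\<sigma> = cons_perm ?l \<tau>"
    using permutes_eq_cons_perm[OF \<sigma> hook(1)] by blast
  obtain g where g: "g \<in> {0..<?L} \<rightarrow>\<^sub>E {0..<?l}" and f_eq: "f = cons_map ?L g"
  proof (rule PiE_eq_cons_map)
    show "f \<in> {0..<Suc ?L} \<rightarrow>\<^sub>E {0..<Suc ?l}" using frobenius_maps_PiE[OF f] unfolding length_Cons .
  qed (use hook in auto)
  with f \<sigma>_eq \<sigma>_eq have "g \<in> frobenius_maps (map (\<lambda>x. x - 1) \<mu>) \<alpha> \<tau>"
    using cons_map_in_frobenius_maps_iff[OF ge1 \<tau>] by blast
  with \<tau> p \<sigma>_eq f_eq show "p \<in> ?F ` ?Q"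
    unfolding frobenius_pairs_def by force
next
  fix p
  assume "p \<in> ?F ` ?Q"
  then obtain \<tau> g where p: "p = ?F (\<tau>, g)" and \<tau>: "\<tau> permutes {0..<length \<mu>}"
    and g: "g \<in> frobenius_maps (map (\<lambda>x. x - 1) \<mu>) \<alpha> \<tau>"
    unfolding frobenius_pairs_def by auto
  have "g \<in> {0..<length \<alpha>} \<rightarrow>\<^sub>E {0..<length \<mu>}" using frobenius_maps_PiE[OF g] unfolding length_map .
  with \<mu> \<tau> g show "p \<in> ?P"
    unfolding p frobenius_pairs_def
    using cons_map_in_frobenius_maps_iff cons_perm_permutes by auto
qed

lemma frobenius_pairs_empty: "frobenius_pairs [] [] = {(id, \<lambda>_. undefined)}"
  unfolding frobenius_pairs_def frobenius_maps_def by (auto simp: PiE_empty_domain)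

lemma sorted_desc_takeWhile_pos:
  fixes xs :: "nat list"
  assumes "sorted_wrt (\<ge>) xs"
  shows "xs = takeWhile (\<lambda>x. 0 < x) xs @ replicate (length (dropWhile (\<lambda>x. 0 < x) xs)) 0"
proof -
  let ?d = "dropWhile (\<lambda>x. 0 < x) xs"
  have "\<forall>y\<in>set ?d. y = 0"
  proof (cases ?d)
    case (Cons b bs)
    then have "b = 0" using hd_dropWhile[of "\<lambda>x. 0 < x" xs] by simp
    moreover have "sorted_wrt (\<ge>) ?d"
      using assms by (metis sorted_wrt_append takeWhile_dropWhile_id)
    ultimately show ?thesis using Cons by auto
  qed (simp only: list.set(1) ball_empty)
  then have "?d = replicate (length ?d) 0" by (simp add: replicate_length_same)
  then show ?thesis by (metis takeWhile_dropWhile_id)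
qed

definition strip_column :: "nat list \<Rightarrow> nat list" where
  "strip_column \<mu> = takeWhile (\<lambda>x. 0 < x) (map (\<lambda>x. x - 1) \<mu>)"

lemma strip_column_pos: "\<forall>x\<in>set (strip_column \<mu>). 0 < x"
  unfolding strip_column_def by (auto dest: set_takeWhileD)

lemma sorted_map_pred: "sorted_wrt (\<ge>) \<mu> \<Longrightarrow> sorted_wrt (\<ge>) (map (\<lambda>x. x - 1) (\<mu> :: nat list))"
  unfolding sorted_wrt_map by (erule sorted_wrt_mono_rel[rotated]) simp

lemma sorted_strip_column: "sorted_wrt (\<ge>) \<mu> \<Longrightarrow> sorted_wrt (\<ge>) (strip_column \<mu>)"
  unfolding strip_column_def by (intro sorted_wrt_takeWhile sorted_map_pred)

lemma map_pred_eq_strip_column_zeros: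
  assumes "sorted_wrt (\<ge>) \<mu>"
  obtains z where "map (\<lambda>x. x - 1) \<mu> = strip_column \<mu> @ replicate z 0"
proof
  show "map (\<lambda>x. x - 1) \<mu> = strip_column \<mu> @ replicate (length (dropWhile (\<lambda>x. 0 < x) (map (\<lambda>x. x - 1) \<mu>))) 0"
    unfolding strip_column_def using sorted_map_pred[OF assms] by (rule sorted_desc_takeWhile_pos)
qed

lemma sum_list_strip_column:
  assumes "sorted_wrt (\<ge>) \<mu>" and "\<forall>x\<in>set \<mu>. 0 < x"
  shows "sum_list (strip_column \<mu>) + length \<mu> = sum_list \<mu>"
proof -
  obtain z where "map (\<lambda>x. x - 1) \<mu> = strip_column \<mu> @ replicate z 0"
    using map_pred_eq_strip_column_zeros[OF assms(1)] .
  then have "sum_list (strip_column \<mu>) = sum_list (map (\<lambda>x. x - 1) \<mu>)"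
    by (simp add: sum_list_replicate)
  also have "\<dots> + length \<mu> = sum_list \<mu>"
    using assms(2) by (induction \<mu>) auto
  finally show ?thesis .
qed

lemma principal_hook_strip_column: "principal_hook (strip_column \<mu>) \<le> principal_hook \<mu>"
proof (cases "strip_column \<mu> = []")
  case False
  then obtain a \<mu>' where \<mu>: "\<mu> = a # \<mu>'" by (cases \<mu>) (auto simp: strip_column_def)
  have "hd (strip_column \<mu>) = a - 1" using False unfolding \<mu> strip_column_def by (cases "0 < a - 1") auto
  moreover have "length (strip_column \<mu>) \<le> length \<mu>"
    unfolding strip_column_def using length_takeWhile_le by (metis length_map)
  ultimately show ?thesis using False unfolding principal_hook_def \<mu> by auto
qed (simp add: principal_hook_def)

lemma is_partition_cons_principal_hook:
  assumes "sorted_wrt (\<ge>) (a # \<mu>)" and "\<forall>x\<in>set (a # \<mu>). 0 < x"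
    and \<alpha>: "is_partition (sum_list (strip_column \<mu>)) \<alpha>"
    and hd_\<alpha>: "strip_column \<mu> \<noteq> [] \<longrightarrow> hd \<alpha> = principal_hook (strip_column \<mu>)"
  shows "is_partition (sum_list (a # \<mu>)) ((a + length \<mu>) # \<alpha>)"
proof -
  have \<mu>: "sorted_wrt (\<ge>) \<mu>" "\<forall>x\<in>set \<mu>. 0 < x \<and> x \<le> a" using assms(1,2) by auto
  have "x \<le> a + length \<mu>" if "x \<in> set \<alpha>" for x
  proof -
    have "strip_column \<mu> \<noteq> []" using that \<alpha> by (force simp: is_partition_def)
    have "x \<le> hd \<alpha>" using \<alpha> that unfolding is_partition_def by (cases \<alpha>) auto
    also have "\<dots> \<le> principal_hook \<mu>"
      using hd_\<alpha> \<open>strip_column \<mu> \<noteq> []\<close> principal_hook_strip_column by simp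
    also have "\<dots> \<le> a + length \<mu>" using \<mu>(2) by (cases \<mu>) (auto simp: principal_hook_def)
    finally show ?thesis .
  qed
  moreover have "sum_list (strip_column \<mu>) + length \<mu> = sum_list \<mu>"
    using sum_list_strip_column \<mu> by blast
  ultimately show ?thesis
    using \<alpha> assms(2) unfolding is_partition_def by auto
qed

text \<open>Strip the first column of \<open>\<mu>\<close>, take a cycle type for what remains and put the principal
  hook length in front of it; the set of admissible \<open>\<sigma>\<close> stays a singleton.\<close>

lemma exists_cycle_type_with_unique_perm:
  assumes "sorted_wrt (\<ge>) \<mu>" and "\<forall>x\<in>set \<mu>. 0 < x"
  shows "\<exists>\<alpha> \<sigma>. is_partition (sum_list \<mu>) \<alpha> \<and> fst ` frobenius_pairs \<mu> \<alpha> = {\<sigma>} \<and>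
    (\<mu> \<noteq> [] \<longrightarrow> hd \<alpha> = principal_hook \<mu>)"
  using assms
proof (induction "length \<mu>" arbitrary: \<mu> rule: less_induct)
  case less
  show ?case
  proof (cases \<mu>)
    case Nil
    then show ?thesis
      by (intro exI[of _ "[]"] exI[of _ id]) (simp add: is_partition_def frobenius_pairs_empty)
  next
    case (Cons a \<mu>')
    let ?l = "length \<mu>'" and ?\<nu> = "strip_column \<mu>'"
    have \<mu>': "\<forall>x\<in>set \<mu>'. 1 \<le> x \<and> x \<le> a" and sorted_\<mu>': "sorted_wrt (\<ge>) \<mu>'"
      using less.prems Cons by auto
    have "length ?\<nu> < length \<mu>"
      unfolding Cons strip_column_def using length_takeWhile_le by (metis le_imp_less_Suc length_Cons length_map)
    then obtain \<alpha>' \<tau> where \<alpha>': "is_partition (sum_list ?\<nu>) \<alpha>'" and \<tau>: "fst ` frobenius_pairs ?\<nu> \<alpha>' = {\<tau>}"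
      and hd_\<alpha>': "?\<nu> \<noteq> [] \<longrightarrow> hd \<alpha>' = principal_hook ?\<nu>"
      using less.hyps[OF _ sorted_strip_column[OF sorted_\<mu>'] strip_column_pos] by blast
    have pos_\<alpha>': "\<forall>x\<in>set \<alpha>'. 0 < x" using \<alpha>' unfolding is_partition_def by simp
    obtain z where zeros: "map (\<lambda>x. x - 1) \<mu>' = ?\<nu> @ replicate z 0"
      using map_pred_eq_strip_column_zeros[OF sorted_\<mu>'] .
    have "fst ` frobenius_pairs \<mu> ((a + ?l) # \<alpha>') = cons_perm ?l ` fst ` frobenius_pairs (map (\<lambda>x. x - 1) \<mu>') \<alpha>'"
      unfolding Cons frobenius_pairs_cons_hook[OF \<mu>' pos_\<alpha>'] by force
    also have "\<dots> = {cons_perm ?l \<tau>}"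
      unfolding zeros frobenius_pairs_append_zeros[OF pos_\<alpha>'] \<tau> by simp
    finally have unique: "fst ` frobenius_pairs \<mu> ((a + ?l) # \<alpha>') = {cons_perm ?l \<tau>}" .
    have "is_partition (sum_list \<mu>) ((a + ?l) # \<alpha>')"
      using is_partition_cons_principal_hook less.prems \<alpha>' hd_\<alpha>' unfolding Cons by blast
    with unique show ?thesis
      unfolding Cons principal_hook_def by auto
  qed
qed

lemma exists_character_ne_zero_with_principal_hook:
  assumes "sorted_wrt (\<ge>) \<mu>" and "\<forall>x\<in>set \<mu>. 0 < x" and "\<mu> \<noteq> []"
  shows "\<exists>\<alpha>. is_partition (sum_list \<mu>) \<alpha> \<and> character \<mu> \<alpha> \<noteq> 0 \<and> principal_hook \<mu> \<in> set \<alpha>"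
proof -
  obtain \<alpha> \<sigma> where \<alpha>: "is_partition (sum_list \<mu>) \<alpha>" "fst ` frobenius_pairs \<mu> \<alpha> = {\<sigma>}"
    "hd \<alpha> = principal_hook \<mu>"
    using exists_cycle_type_with_unique_perm[OF assms(1,2)] assms(3) by blast
  have "\<alpha> \<noteq> []" using \<alpha>(1) assms(2,3) by (cases \<mu>) (auto simp: is_partition_def)
  then show ?thesis using \<alpha> character_ne_zero_if_unique_perm by (metis list.set_sel(1))
qed

theorem has_var_ge_char_poly_iff:
  assumes "sorted_wrt (\<ge>) \<mu>" and "\<forall>x\<in>set \<mu>. 0 < x" and "0 < i"
  shows "has_var_ge i (char_poly \<mu>) \<longleftrightarrow> i \<le> principal_hook \<mu>"
proof
  assume "has_var_ge i (char_poly \<mu>)"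
  then obtain \<alpha> j where "character \<mu> \<alpha> \<noteq> 0" "j \<in> set \<alpha>" "i \<le> j"
    unfolding has_var_ge_iff_vars vars_char_poly by blast
  then show "i \<le> principal_hook \<mu>" using part_le_principal_hook[OF assms(1)] by fastforce
next
  assume "i \<le> principal_hook \<mu>"
  moreover from this have "\<mu> \<noteq> []" using assms(3) by (auto simp: principal_hook_def)
  ultimately show "has_var_ge i (char_poly \<mu>)"
    using exists_character_ne_zero_with_principal_hook[OF assms(1,2)]
    unfolding has_var_ge_iff_vars vars_char_poly by blast
qed

section \<open>Hook lengths at the cells \<open>(2,1)\<close> and \<open>(1,2)\<close>\<close>

lemma length_conj_part: "length (conj_part lam) = (if lam = [] then 0 else hd lam)"
  unfolding conj_part_def by simp

lemma nth_conj_part: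
  "lam \<noteq> [] \<Longrightarrow> j < hd lam \<Longrightarrow> conj_part lam ! j = length (filter (\<lambda>p. Suc j \<le> p) lam)"
  unfolding conj_part_def by (simp del: upt_Suc add: nth_map)

lemma sorted_conj_part: "sorted_wrt (\<ge>) (conj_part lam)"
proof (cases "lam = []")
  case False
  have "length (filter (\<lambda>p. Suc j \<le> p) lam) \<le> length (filter (\<lambda>p. Suc i \<le> p) lam)" if "i < j" for i j
    using that by (induction lam) auto
  with False show ?thesis
    by (auto simp: sorted_wrt_iff_nth_less length_conj_part nth_conj_part)
qed (simp add: conj_part_def)

lemma conj_part_pos: "\<forall>x\<in>set (conj_part lam). 0 < x"
proof
  fix x assume "x \<in> set (conj_part lam)"
  then obtain j where j: "j < hd lam" "x = conj_part lam ! j" and "lam \<noteq> []"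
    by (auto simp: in_set_conv_nth length_conj_part split: if_splits)
  then have "hd lam \<in> set (filter (\<lambda>p. Suc j \<le> p) lam)" by simp
  then show "0 < x" using j nth_conj_part[OF \<open>lam \<noteq> []\<close> j(1)] by (metis length_pos_if_in_set)
qed

lemma hook_2_1:
  assumes "\<forall>x\<in>set lam. 0 < x"
  shows "hook 2 1 lam = principal_hook (tl lam)"
proof (cases "2 \<le> length lam")
  case True
  then obtain a b lam' where lam: "lam = a # b # lam'" by (cases lam rule: remdups_adj.cases) auto
  have "filter (\<lambda>p. Suc 0 \<le> p) lam = lam" using assms by (simp add: filter_id_conv Suc_le_eq)
  then have "conj_part lam ! 0 = length lam"
    using assms nth_conj_part[of lam 0] unfolding lam by simp
  moreover have "0 < length (conj_part lam)" using assms unfolding lam length_conj_part by simp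
  ultimately have "part_nth (conj_part lam) 1 = length lam" by (simp add: part_nth_def Suc_le_eq)
  moreover have "part_nth lam 2 = b" by (simp add: part_nth_def lam)
  ultimately show ?thesis
    using assms unfolding hook_def principal_hook_def lam by auto
next
  case False
  then have "tl lam = []" by (cases lam) (auto simp: Suc_le_eq)
  with False show ?thesis unfolding hook_def part_nth_def principal_hook_def by simp
qed

lemma hook_1_2: "hook 1 2 lam = principal_hook (tl (conj_part lam))"
proof (cases "lam \<noteq> [] \<and> 2 \<le> hd lam")
  case True
  then have length_c: "length (conj_part lam) = hd lam" by (simp add: length_conj_part)
  with True obtain c\<^sub>0 c\<^sub>1 c where c: "conj_part lam = c\<^sub>0 # c\<^sub>1 # c"
    by (cases "conj_part lam" rule: remdups_adj.cases) auto
  have "0 < c\<^sub>1" using conj_part_pos[of lam] unfolding c by simp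
  moreover have "part_nth lam 1 = hd lam" using True by (cases lam) (auto simp: part_nth_def)
  ultimately show ?thesis
    using True length_c unfolding hook_def principal_hook_def part_nth_def c by auto
next
  case False
  then have "length (conj_part lam) \<le> 1" by (auto simp: length_conj_part)
  then have "tl (conj_part lam) = []" by (cases "conj_part lam") auto
  moreover have "part_nth lam 1 < 2" using False by (cases lam) (auto simp: part_nth_def)
  ultimately show ?thesis unfolding hook_def principal_hook_def by simp
qed

lemma sorted_pos_tl:
  "sorted_wrt (\<ge>) xs \<Longrightarrow> \<forall>x\<in>set xs. (0::nat) < x \<Longrightarrow> sorted_wrt (\<ge>) (tl xs) \<and> (\<forall>x\<in>set (tl xs). 0 < x)"
  by (cases xs) auto

theorem lemma3p1:
  fixes lam :: "nat list" and n i :: nat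
  assumes "is_partition n lam" and "1 \<le> i"
  shows "(hook 2 1 lam \<ge> i \<and> hook 1 2 lam \<ge> i) \<longleftrightarrow>
         (has_var_ge i (char_poly (tl lam)) \<and> has_var_ge i (char_poly (tl (conj_part lam))))"
proof -
  have lam: "sorted_wrt (\<ge>) lam" "\<forall>x\<in>set lam. 0 < x" using assms(1) unfolding is_partition_def by auto
  have "0 < i" using assms(2) by simp
  then have hook_2_1_iff: "has_var_ge i (char_poly (tl lam)) \<longleftrightarrow> i \<le> hook 2 1 lam"
    unfolding hook_2_1[OF lam(2)] using sorted_pos_tl[OF lam] has_var_ge_char_poly_iff by blast
  have hook_1_2_iff: "has_var_ge i (char_poly (tl (conj_part lam))) \<longleftrightarrow> i \<le> hook 1 2 lam"
    unfolding hook_1_2 using sorted_pos_tl[OF sorted_conj_part conj_part_pos] \<open>0 < i\<close>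
      has_var_ge_char_poly_iff by blast
  show ?thesis using hook_2_1_iff hook_1_2_iff by blast
qed

end
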